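(* In the affine Schur category $\mathcal{AS}$ over a commutative ring $\Bbbk$, for all integers $a,b\ge 1$ and all $u\in\Bbbk$ the following equalities of morphisms hold: $$(X_{a,b}\otimes 1_u)\circ(1_a\otimes D_{u,b})\circ(D_{u,a}\otimes 1_b)=(1_b\otimes D_{u,a})\circ(D_{u,b}\otimes 1_a)\circ(1_u\otimes X_{a,b})\quad\text{as morphisms }(u,a,b)\to(b,a,u),$$ $$(1_u\otimes X_{a,b})\circ(U_{a,u}\otimes 1_b)\circ(1_a\otimes U_{b,u})=(U_{b,u}\otimes 1_a)\circ(1_b\otimes U_{a,u})\circ(X_{a,b}\otimes 1_u)\quad\text{as morphisms }(a,b,u)\to(u,b,a).$$
   Context: Let $\Bbbk$ be a commutative ring with $1$. The affine Schur category $\mathcal{AS}$ is the strict $\Bbbk$-linear monoidal category defined as follows. Generating objects: the integers $a\ge1$ (black strands of thickness $a$) and the elements $u\in\Bbbk$ (red strands labelled $u$); objects are finite words in these, tensor product being concatenation, written $(x_1,\dots,x_k)$ or $x_1\otimes\cdots\otimes x_k$. Generating morphisms, for $a,b\ge1$, $u\in\Bbbk$: merge $M_{a,b}:(a,b)\to(a+b)$, split $S_{a,b}:(a+b)\to(a,b)$, crossing $X_{a,b}:(a,b)\to(b,a)$, dot $\omega_a:(a)\to(a)$, traverse-up $U_{a,u}:(a,u)\to(u,a)$, traverse-down $D_{u,a}:(u,a)\to(a,u)$. Conventions: a black strand of thickness $0$ is the unit object and any merge, split or crossing involving a thickness-$0$ strand is an identity; $1_x$ is an identity. Derived morphisms: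 $\omega_{a,0}:=1_a$; $\omega_{a,r}:=M_{r,a-r}\circ(\omega_r\otimes1_{a-r})\circ S_{r,a-r}$ for $1\le r\le a$ (so $\omega_{a,a}=\omega_a$); $\omega_{a,r}:=0$ if $r<0$ or $r>a$; $S^{(a)}:(a)\to(1,\dots,1)$ and $M^{(a)}:(1,\dots,1)\to(a)$ are iterated splits/merges; $g_r(u):=\sum_{i=0}^{r}(-1)^i\big(\prod_{j=0}^{i-1}(u+j)\big)\omega_{r,r-i}\in\mathrm{End}(r)$. Defining relations, for all $a,b,c,d,r\ge1$, $u\in\Bbbk$: (R1) $M_{a+b,c}(M_{a,b}\otimes1_c)=M_{a,b+c}(1_a\otimes M_{b,c})$, $(S_{a,b}\otimes1_c)S_{a+b,c}=(1_a\otimes S_{b,c})S_{a,b+c}$; (R2) if $a+c=b+d$: $S_{b,d}M_{a,c}=\sum(M_{s,c-t}\otimes M_{a-s,t})(1_s\otimes X_{a-s,c-t}\otimes1_t)(S_{s,a-s}\otimes S_{c-t,t})$ over $0\le s\le\min(a,b)$, $0\le t\le\min(c,d)$, $t-s=d-a$; (R3) $M_{a,b}S_{a,b}=\binom{a+b}{a}1_{a+b}$; (R4) $(\omega_b\otimes1_a)X_{a,b}=\sum_{t=0}^{\min(a,b)}t!\,(M_{t,b-t}\otimes M_{a-t,t})(1_t\otimes X_{a-t,b-t}\otimes1_t)(1_t\otimes1_{a-t}\otimes\omega_{b-t}\otimes1_t)(S_{t,a-t}\otimes S_{b-t,t})$ and $X_{b,a}(\omega_b\otimes1_a)=\sum_{t=0}^{\min(a,b)}t!\,(M_{t,a-t}\otimes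 M_{b-t,t})(1_t\otimes1_{a-t}\otimes\omega_{b-t}\otimes1_t)(1_t\otimes X_{b-t,a-t}\otimes1_t)(S_{t,b-t}\otimes S_{a-t,t})$; (R5) $S_{a,b}\omega_{a+b}=(\omega_a\otimes\omega_b)S_{a,b}$, $\omega_{a+b}M_{a,b}=M_{a,b}(\omega_a\otimes\omega_b)$; (R6) $M^{(a)}(\omega_1\otimes\cdots\otimes\omega_1)S^{(a)}=a!\,\omega_a$; (R7) $D_{u,r}U_{r,u}=g_r(u)\otimes1_u$, $U_{r,u}D_{u,r}=1_u\otimes g_r(u)$; (R8) $(D_{u,b}\otimes1_a)(1_u\otimes X_{a,b})(U_{a,u}\otimes1_b)=(1_b\otimes U_{a,u})(X_{a,b}\otimes1_u)(1_a\otimes D_{u,b})+\sum_{t=1}^{\min(a,b)}t!\,(M_{t,b-t}\otimes1_u\otimes M_{a-t,t})(1_t\otimes1_{b-t}\otimes U_{a-t,u}\otimes1_t)(1_t\otimes X_{a-t,b-t}\otimes1_u\otimes1_t)(1_t\otimes1_{a-t}\otimes D_{u,b-t}\otimes1_t)(S_{t,a-t}\otimes1_u\otimes S_{b-t,t})$; (R9) $(1_u\otimes S_{b,c})U_{b+c,u}=(U_{b,u}\otimes1_c)(1_b\otimes U_{c,u})(S_{b,c}\otimes1_u)$, $(S_{a,b}\otimes1_u)D_{u,a+b}=(1_a\otimes D_{u,b})(D_{u,a}\otimes1_b)(1_u\otimes S_{a,b})$, $D_{u,b+c}(1_u\otimes M_{b,c})=(M_{b,c}\otimes1_u)(1_b\otimes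 D_{u,c})(D_{u,b}\otimes1_c)$, $U_{a+b,u}(M_{a,b}\otimes1_u)=(1_u\otimes M_{a,b})(U_{a,u}\otimes1_b)(1_a\otimes U_{b,u})$. *)

theory Defs
  imports Main
begin

text \<open>Objects: words in generating objects (black strands of thickness a \<ge> 1, red strands u).
  Morphisms: formal expressions built from generators by composition, tensor product and
  k-linear combinations; equality of morphisms in AS is the relation as_eq, the smallest
  equivalence on well-typed expressions that is a congruence for all operations, satisfies
  the axioms of a strict k-linear monoidal category, and contains the defining relations R1-R9.\<close>

datatype 'k ob = Blk nat | Red 'k

datatype 'k mor =
    Idm "'k ob list"
  | Mg nat nat
  | Sp nat nat
  | Cr nat nat
  | Dt nat
  | Up nat 'k
  | Dn 'k nat
  | Cmp "'k mor" "'k mor"   \<comment> \<open>Cmp f g = f \<circ> g (g first)\<close>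
  | Tns "'k mor" "'k mor"
  | Zr "'k ob list" "'k ob list"
  | Ad "'k mor" "'k mor"
  | Sm 'k "'k mor"

definition validob :: "'k ob list \<Rightarrow> bool" where
  "validob x \<longleftrightarrow> Blk 0 \<notin> set x"

inductive hty :: "'k mor \<Rightarrow> 'k ob list \<Rightarrow> 'k ob list \<Rightarrow> bool" where
  ty_id: "validob x \<Longrightarrow> hty (Idm x) x x"
| ty_mg: "a \<ge> 1 \<Longrightarrow> b \<ge> 1 \<Longrightarrow> hty (Mg a b) [Blk a, Blk b] [Blk (a+b)]"
| ty_sp: "a \<ge> 1 \<Longrightarrow> b \<ge> 1 \<Longrightarrow> hty (Sp a b) [Blk (a+b)] [Blk a, Blk b]"
| ty_cr: "a \<ge> 1 \<Longrightarrow> b \<ge> 1 \<Longrightarrow> hty (Cr a b) [Blk a, Blk b] [Blk b, Blk a]"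
| ty_dt: "a \<ge> 1 \<Longrightarrow> hty (Dt a) [Blk a] [Blk a]"
| ty_up: "a \<ge> 1 \<Longrightarrow> hty (Up a u) [Blk a, Red u] [Red u, Blk a]"
| ty_dn: "a \<ge> 1 \<Longrightarrow> hty (Dn u a) [Red u, Blk a] [Blk a, Red u]"
| ty_cmp: "hty f y z \<Longrightarrow> hty g x y \<Longrightarrow> hty (Cmp f g) x z"
| ty_tns: "hty f x y \<Longrightarrow> hty g x' y' \<Longrightarrow> hty (Tns f g) (x @ x') (y @ y')"
| ty_zr: "validob x \<Longrightarrow> validob y \<Longrightarrow> hty (Zr x y) x y"
| ty_ad: "hty f x y \<Longrightarrow> hty g x y \<Longrightarrow> hty (Ad f g) x y"
| ty_sm: "hty f x y \<Longrightarrow> hty (Sm c f) x y"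

text \<open>A black strand of thickness 0 is the unit object (empty word); merges, splits,
  crossings, dots, traverses involving thickness 0 are identities.\<close>

definition bk :: "nat \<Rightarrow> 'k ob list" where
  "bk a = (if a = 0 then [] else [Blk a])"

definition idb :: "nat \<Rightarrow> 'k mor" where
  "idb a = Idm (bk a)"

definition mM :: "nat \<Rightarrow> nat \<Rightarrow> 'k mor" where
  "mM a b = (if a = 0 \<or> b = 0 then idb (a+b) else Mg a b)"

definition mS :: "nat \<Rightarrow> nat \<Rightarrow> 'k mor" where
  "mS a b = (if a = 0 \<or> b = 0 then idb (a+b) else Sp a b)"

definition mX :: "nat \<Rightarrow> nat \<Rightarrow> 'k mor" where
  "mX a b = (if a = 0 \<or> b = 0 then idb (a+b) else Cr a b)"

definition om :: "nat \<Rightarrow> 'k mor" where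
  "om a = (if a = 0 then Idm [] else Dt a)"

definition mU :: "nat \<Rightarrow> 'k \<Rightarrow> 'k mor" where
  "mU a u = (if a = 0 then Idm [Red u] else Up a u)"

definition mD :: "'k \<Rightarrow> nat \<Rightarrow> 'k mor" where
  "mD u a = (if a = 0 then Idm [Red u] else Dn u a)"

definition msum :: "'k ob list \<Rightarrow> 'k ob list \<Rightarrow> 'k mor list \<Rightarrow> 'k mor" where
  "msum x y ts = foldr Ad ts (Zr x y)"

definition omr :: "nat \<Rightarrow> nat \<Rightarrow> 'k mor" where
  "omr a r = (if r = 0 then idb a
              else if r > a then Zr (bk a) (bk a)
              else Cmp (Cmp (mM r (a-r)) (Tns (om r) (idb (a-r)))) (mS r (a-r)))"

definition gpol :: "nat \<Rightarrow> 'k::comm_ring_1 \<Rightarrow> 'k mor" where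
  "gpol r u = msum (bk r) (bk r)
     (map (\<lambda>i. Sm ((-1)^i * (\<Prod>j<i. u + of_nat j)) (omr r (r - i))) [0..<Suc r])"

fun Sall :: "nat \<Rightarrow> 'k mor" where
  "Sall 0 = Idm []"
| "Sall (Suc 0) = Idm [Blk 1]"
| "Sall (Suc (Suc n)) = Cmp (Tns (Sall (Suc n)) (Idm [Blk 1])) (mS (Suc n) 1)"

fun Mall :: "nat \<Rightarrow> 'k mor" where
  "Mall 0 = Idm []"
| "Mall (Suc 0) = Idm [Blk 1]"
| "Mall (Suc (Suc n)) = Cmp (mM (Suc n) 1) (Tns (Mall (Suc n)) (Idm [Blk 1]))"

fun dots1 :: "nat \<Rightarrow> 'k mor" where
  "dots1 0 = Idm []"
| "dots1 (Suc n) = Tns (dots1 n) (Dt 1)"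

definition R2rhs :: "nat \<Rightarrow> nat \<Rightarrow> nat \<Rightarrow> nat \<Rightarrow> 'k mor" where
  "R2rhs a b c d = msum [Blk a, Blk c] [Blk b, Blk d]
     (map (\<lambda>(s,t). Cmp (Cmp (Tns (mM s (c-t)) (mM (a-s) t))
                            (Tns (Tns (idb s) (mX (a-s) (c-t))) (idb t)))
                       (Tns (mS s (a-s)) (mS (c-t) t)))
       [(s,t). s \<leftarrow> [0..<Suc (min a b)], t \<leftarrow> [0..<Suc (min c d)],
               int t - int s = int d - int a])"

definition R4rhs1 :: "nat \<Rightarrow> nat \<Rightarrow> 'k::comm_ring_1 mor" where
  "R4rhs1 a b = msum [Blk a, Blk b] [Blk b, Blk a]
     (map (\<lambda>t. Sm (of_nat (fact t))
        (Cmp (Cmp (Cmp (Tns (mM t (b-t)) (mM (a-t) t))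
                       (Tns (Tns (idb t) (mX (a-t) (b-t))) (idb t)))
                  (Tns (Tns (Tns (idb t) (idb (a-t))) (om (b-t))) (idb t)))
             (Tns (mS t (a-t)) (mS (b-t) t))))
       [0..<Suc (min a b)])"

definition R4rhs2 :: "nat \<Rightarrow> nat \<Rightarrow> 'k::comm_ring_1 mor" where
  "R4rhs2 a b = msum [Blk b, Blk a] [Blk a, Blk b]
     (map (\<lambda>t. Sm (of_nat (fact t))
        (Cmp (Cmp (Cmp (Tns (mM t (a-t)) (mM (b-t) t))
                       (Tns (Tns (Tns (idb t) (idb (a-t))) (om (b-t))) (idb t)))
                  (Tns (Tns (idb t) (mX (b-t) (a-t))) (idb t)))
             (Tns (mS t (b-t)) (mS (a-t) t))))
       [0..<Suc (min a b)])"

definition R8rhs :: "nat \<Rightarrow> nat \<Rightarrow> 'k::comm_ring_1 \<Rightarrow> 'k mor" where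
  "R8rhs a b u = Ad
     (Cmp (Cmp (Tns (idb b) (mU a u)) (Tns (mX a b) (Idm [Red u]))) (Tns (idb a) (mD u b)))
     (msum [Blk a, Red u, Blk b] [Blk b, Red u, Blk a]
       (map (\<lambda>t. Sm (of_nat (fact t))
          (Cmp (Cmp (Cmp (Cmp
             (Tns (Tns (mM t (b-t)) (Idm [Red u])) (mM (a-t) t))
             (Tns (Tns (Tns (idb t) (idb (b-t))) (mU (a-t) u)) (idb t)))
             (Tns (Tns (Tns (idb t) (mX (a-t) (b-t))) (Idm [Red u])) (idb t)))
             (Tns (Tns (Tns (idb t) (idb (a-t))) (mD u (b-t))) (idb t)))
             (Tns (Tns (mS t (a-t)) (Idm [Red u])) (mS (b-t) t))))
         [1..<Suc (min a b)]))"

inductive as_eq :: "'k::comm_ring_1 mor \<Rightarrow> 'k mor \<Rightarrow> bool" where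
  e_refl: "hty f x y \<Longrightarrow> as_eq f f"
| e_sym: "as_eq f g \<Longrightarrow> as_eq g f"
| e_trans: "as_eq f g \<Longrightarrow> as_eq g h \<Longrightarrow> as_eq f h"
| c_cmp: "as_eq f f' \<Longrightarrow> as_eq g g' \<Longrightarrow> hty f y z \<Longrightarrow> hty g x y \<Longrightarrow> as_eq (Cmp f g) (Cmp f' g')"
| c_tns: "as_eq f f' \<Longrightarrow> as_eq g g' \<Longrightarrow> as_eq (Tns f g) (Tns f' g')"
| c_ad: "as_eq f f' \<Longrightarrow> as_eq g g' \<Longrightarrow> hty f x y \<Longrightarrow> hty g x y \<Longrightarrow> as_eq (Ad f g) (Ad f' g')"
| c_sm: "as_eq f f' \<Longrightarrow> as_eq (Sm c f) (Sm c f')"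
| cat_idl: "hty f x y \<Longrightarrow> as_eq (Cmp (Idm y) f) f"
| cat_idr: "hty f x y \<Longrightarrow> as_eq (Cmp f (Idm x)) f"
| cat_assoc: "hty f z w \<Longrightarrow> hty g y z \<Longrightarrow> hty h x y \<Longrightarrow>
     as_eq (Cmp (Cmp f g) h) (Cmp f (Cmp g h))"
| mon_assoc: "hty f x y \<Longrightarrow> hty g x' y' \<Longrightarrow> hty h x'' y'' \<Longrightarrow>
     as_eq (Tns (Tns f g) h) (Tns f (Tns g h))"
| mon_unitl: "hty f x y \<Longrightarrow> as_eq (Tns (Idm []) f) f"
| mon_unitr: "hty f x y \<Longrightarrow> as_eq (Tns f (Idm [])) f"
| mon_id: "validob x \<Longrightarrow> validob y \<Longrightarrow> as_eq (Tns (Idm x) (Idm y)) (Idm (x @ y))"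
| mon_interchange: "hty f y z \<Longrightarrow> hty g x y \<Longrightarrow> hty f' y' z' \<Longrightarrow> hty g' x' y' \<Longrightarrow>
     as_eq (Tns (Cmp f g) (Cmp f' g')) (Cmp (Tns f f') (Tns g g'))"
| lin_add_assoc: "hty f x y \<Longrightarrow> hty g x y \<Longrightarrow> hty h x y \<Longrightarrow> as_eq (Ad (Ad f g) h) (Ad f (Ad g h))"
| lin_add_comm: "hty f x y \<Longrightarrow> hty g x y \<Longrightarrow> as_eq (Ad f g) (Ad g f)"
| lin_add_zero: "hty f x y \<Longrightarrow> as_eq (Ad f (Zr x y)) f"
| lin_add_neg: "hty f x y \<Longrightarrow> as_eq (Ad f (Sm (-1) f)) (Zr x y)"
| lin_sm_one: "hty f x y \<Longrightarrow> as_eq (Sm 1 f) f"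
| lin_sm_mult: "hty f x y \<Longrightarrow> as_eq (Sm (c * d) f) (Sm c (Sm d f))"
| lin_sm_add: "hty f x y \<Longrightarrow> as_eq (Sm (c + d) f) (Ad (Sm c f) (Sm d f))"
| lin_sm_dist: "hty f x y \<Longrightarrow> hty g x y \<Longrightarrow> as_eq (Sm c (Ad f g)) (Ad (Sm c f) (Sm c g))"
| bil_cmp_addl: "hty f y z \<Longrightarrow> hty f' y z \<Longrightarrow> hty g x y \<Longrightarrow>
     as_eq (Cmp (Ad f f') g) (Ad (Cmp f g) (Cmp f' g))"
| bil_cmp_addr: "hty f y z \<Longrightarrow> hty g x y \<Longrightarrow> hty g' x y \<Longrightarrow>
     as_eq (Cmp f (Ad g g')) (Ad (Cmp f g) (Cmp f g'))"
| bil_cmp_sml: "hty f y z \<Longrightarrow> hty g x y \<Longrightarrow> as_eq (Cmp (Sm c f) g) (Sm c (Cmp f g))"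
| bil_cmp_smr: "hty f y z \<Longrightarrow> hty g x y \<Longrightarrow> as_eq (Cmp f (Sm c g)) (Sm c (Cmp f g))"
| bil_cmp_zrl: "hty g x y \<Longrightarrow> validob z \<Longrightarrow> as_eq (Cmp (Zr y z) g) (Zr x z)"
| bil_cmp_zrr: "hty f y z \<Longrightarrow> validob x \<Longrightarrow> as_eq (Cmp f (Zr x y)) (Zr x z)"
| bil_tns_addl: "hty f x y \<Longrightarrow> hty f' x y \<Longrightarrow> hty g x' y' \<Longrightarrow>
     as_eq (Tns (Ad f f') g) (Ad (Tns f g) (Tns f' g))"
| bil_tns_addr: "hty f x y \<Longrightarrow> hty g x' y' \<Longrightarrow> hty g' x' y' \<Longrightarrow>
     as_eq (Tns f (Ad g g')) (Ad (Tns f g) (Tns f g'))"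
| bil_tns_sml: "hty f x y \<Longrightarrow> hty g x' y' \<Longrightarrow> as_eq (Tns (Sm c f) g) (Sm c (Tns f g))"
| bil_tns_smr: "hty f x y \<Longrightarrow> hty g x' y' \<Longrightarrow> as_eq (Tns f (Sm c g)) (Sm c (Tns f g))"
| bil_tns_zrl: "hty g x' y' \<Longrightarrow> validob x \<Longrightarrow> validob y \<Longrightarrow>
     as_eq (Tns (Zr x y) g) (Zr (x @ x') (y @ y'))"
| bil_tns_zrr: "hty f x y \<Longrightarrow> validob x' \<Longrightarrow> validob y' \<Longrightarrow>
     as_eq (Tns f (Zr x' y')) (Zr (x @ x') (y @ y'))"
| R1a: "a \<ge> 1 \<Longrightarrow> b \<ge> 1 \<Longrightarrow> c \<ge> 1 \<Longrightarrow>
     as_eq (Cmp (mM (a+b) c) (Tns (mM a b) (idb c))) (Cmp (mM a (b+c)) (Tns (idb a) (mM b c)))"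
| R1b: "a \<ge> 1 \<Longrightarrow> b \<ge> 1 \<Longrightarrow> c \<ge> 1 \<Longrightarrow>
     as_eq (Cmp (Tns (mS a b) (idb c)) (mS (a+b) c)) (Cmp (Tns (idb a) (mS b c)) (mS a (b+c)))"
| R2: "a \<ge> 1 \<Longrightarrow> b \<ge> 1 \<Longrightarrow> c \<ge> 1 \<Longrightarrow> d \<ge> 1 \<Longrightarrow> a + c = b + d \<Longrightarrow>
     as_eq (Cmp (mS b d) (mM a c)) (R2rhs a b c d)"
| R3: "a \<ge> 1 \<Longrightarrow> b \<ge> 1 \<Longrightarrow>
     as_eq (Cmp (mM a b) (mS a b)) (Sm (of_nat ((a+b) choose a)) (idb (a+b)))"
| R4a: "a \<ge> 1 \<Longrightarrow> b \<ge> 1 \<Longrightarrow>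
     as_eq (Cmp (Tns (om b) (idb a)) (mX a b)) (R4rhs1 a b)"
| R4b: "a \<ge> 1 \<Longrightarrow> b \<ge> 1 \<Longrightarrow>
     as_eq (Cmp (mX b a) (Tns (om b) (idb a))) (R4rhs2 a b)"
| R5a: "a \<ge> 1 \<Longrightarrow> b \<ge> 1 \<Longrightarrow>
     as_eq (Cmp (mS a b) (om (a+b))) (Cmp (Tns (om a) (om b)) (mS a b))"
| R5b: "a \<ge> 1 \<Longrightarrow> b \<ge> 1 \<Longrightarrow>
     as_eq (Cmp (om (a+b)) (mM a b)) (Cmp (mM a b) (Tns (om a) (om b)))"
| R6: "a \<ge> 1 \<Longrightarrow>
     as_eq (Cmp (Cmp (Mall a) (dots1 a)) (Sall a)) (Sm (of_nat (fact a)) (om a))"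
| R7a: "r \<ge> 1 \<Longrightarrow> as_eq (Cmp (mD u r) (mU r u)) (Tns (gpol r u) (Idm [Red u]))"
| R7b: "r \<ge> 1 \<Longrightarrow> as_eq (Cmp (mU r u) (mD u r)) (Tns (Idm [Red u]) (gpol r u))"
| R8: "a \<ge> 1 \<Longrightarrow> b \<ge> 1 \<Longrightarrow>
     as_eq (Cmp (Cmp (Tns (mD u b) (idb a)) (Tns (Idm [Red u]) (mX a b))) (Tns (mU a u) (idb b)))
           (R8rhs a b u)"
| R9a: "b \<ge> 1 \<Longrightarrow> c \<ge> 1 \<Longrightarrow>
     as_eq (Cmp (Tns (Idm [Red u]) (mS b c)) (mU (b+c) u))
           (Cmp (Cmp (Tns (mU b u) (idb c)) (Tns (idb b) (mU c u))) (Tns (mS b c) (Idm [Red u])))"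
| R9b: "a \<ge> 1 \<Longrightarrow> b \<ge> 1 \<Longrightarrow>
     as_eq (Cmp (Tns (mS a b) (Idm [Red u])) (mD u (a+b)))
           (Cmp (Cmp (Tns (idb a) (mD u b)) (Tns (mD u a) (idb b))) (Tns (Idm [Red u]) (mS a b)))"
| R9c: "b \<ge> 1 \<Longrightarrow> c \<ge> 1 \<Longrightarrow>
     as_eq (Cmp (mD u (b+c)) (Tns (Idm [Red u]) (mM b c)))
           (Cmp (Cmp (Tns (mM b c) (Idm [Red u])) (Tns (idb b) (mD u c))) (Tns (mD u b) (idb c)))"
| R9d: "a \<ge> 1 \<Longrightarrow> b \<ge> 1 \<Longrightarrow>
     as_eq (Cmp (mU (a+b) u) (Tns (mM a b) (Idm [Red u])))
           (Cmp (Cmp (Tns (Idm [Red u]) (mM a b)) (Tns (mU a u) (idb b))) (Tns (idb a) (mU b u)))"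

end

theory Submission
  imports Defs
begin

(* Let D_x (resp. U_x) be the traversal of the red strand u across a black word x, the composite
   of the generators D_{u,a} (resp. U_{a,u}) over the letters a of x.  Call a morphism f : x -> y
   of black words natural if (f \<otimes> 1_u) D_x = D_y (1_u \<otimes> f), resp.
   (1_u \<otimes> f) U_x = U_y (f \<otimes> 1_u).  Natural morphisms are closed under composition,
   tensor product and linear combinations, and merges and splits are natural by (R9).
   Relation (R2) writes S_{b,a} M_{a,b} as X_{a,b} plus terms built from merges, splits and
   the crossings X_{a-s,b-s} with s \<ge> 1, so by induction on a + b every crossing is natural;
   for X_{a,b} this is the statement. *)

section \<open>Typed equality of morphisms\<close>

fun mor_type :: "'k mor \<Rightarrow> ('k ob list \<times> 'k ob list) option" where
  "mor_type (Idm x) = (if validob x then Some (x, x) else None)"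
| "mor_type (Mg a b) = (if a \<ge> 1 \<and> b \<ge> 1 then Some ([Blk a, Blk b], [Blk (a+b)]) else None)"
| "mor_type (Sp a b) = (if a \<ge> 1 \<and> b \<ge> 1 then Some ([Blk (a+b)], [Blk a, Blk b]) else None)"
| "mor_type (Cr a b) = (if a \<ge> 1 \<and> b \<ge> 1 then Some ([Blk a, Blk b], [Blk b, Blk a]) else None)"
| "mor_type (Dt a) = (if a \<ge> 1 then Some ([Blk a], [Blk a]) else None)"
| "mor_type (Up a u) = (if a \<ge> 1 then Some ([Blk a, Red u], [Red u, Blk a]) else None)"
| "mor_type (Dn u a) = (if a \<ge> 1 then Some ([Red u, Blk a], [Blk a, Red u]) else None)"
| "mor_type (Cmp f g) = (case (mor_type f, mor_type g) of
      (Some (y, z), Some (x, y')) \<Rightarrow> if y = y' then Some (x, z) else None | _ \<Rightarrow> None)"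
| "mor_type (Tns f g) = (case (mor_type f, mor_type g) of
      (Some (x, y), Some (x', y')) \<Rightarrow> Some (x @ x', y @ y') | _ \<Rightarrow> None)"
| "mor_type (Zr x y) = (if validob x \<and> validob y then Some (x, y) else None)"
| "mor_type (Ad f g) = (if mor_type f = mor_type g then mor_type f else None)"
| "mor_type (Sm c f) = mor_type f"

lemma validob_simps [simp]:
  "validob []"
  "validob (c # x) \<longleftrightarrow> c \<noteq> Blk 0 \<and> validob x"
  "validob (x @ y) \<longleftrightarrow> validob x \<and> validob y"
  by (auto simp: validob_def)

lemma hty_iff_mor_type: "hty f x y \<longleftrightarrow> mor_type f = Some (x, y)"
proof
  show "hty f x y \<Longrightarrow> mor_type f = Some (x, y)"
    by (induction rule: hty.induct) auto
  show "mor_type f = Some (x, y) \<Longrightarrow> hty f x y"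
  proof (induction f arbitrary: x y)
    case (Cmp f g)
    then show ?case by (fastforce split: option.splits if_splits intro: hty.ty_cmp)
  next
    case (Tns f g)
    then show ?case by (auto split: option.splits intro!: hty.ty_tns)
  qed (auto split: if_splits intro: hty.intros)
qed

lemma hty_validob: "hty f x y \<Longrightarrow> validob x \<and> validob y"
  by (induction rule: hty.induct) (auto simp: validob_def)

lemma mor_type_validob: "mor_type f = Some (x, y) \<Longrightarrow> validob x \<and> validob y"
  using hty_validob by (auto simp: hty_iff_mor_type)

inductive_cases hty_CmpE: "hty (Cmp f g) x z"
inductive_cases hty_TnsE: "hty (Tns f g) x y"
inductive_cases hty_AdE: "hty (Ad f g) x y"
inductive_cases hty_SmE: "hty (Sm c f) x y"
inductive_cases hty_IdmE: "hty (Idm x) y z"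
inductive_cases hty_ZrE: "hty (Zr x y) x' y'"

lemmas hty_elims = hty_CmpE hty_TnsE hty_AdE hty_SmE hty_IdmE hty_ZrE

text \<open>The congruence rules of as_eq carry typing side conditions; carrying a common type along with
  the equation lets them be discharged by evaluating mor_type.\<close>

definition teq :: "'k::comm_ring_1 mor \<Rightarrow> 'k mor \<Rightarrow> bool" (infix "\<simeq>" 50) where
  "f \<simeq> g \<longleftrightarrow> as_eq f g \<and> (\<exists>x y. hty f x y \<and> hty g x y)"

lemma teq_if_hty:
  assumes "mor_type f \<noteq> None" and "\<And>x y. hty f x y \<Longrightarrow> as_eq f g \<and> hty g x y"
  shows "f \<simeq> g"
  using assms unfolding teq_def hty_iff_mor_type by fastforce

lemma teqI: "as_eq f g \<Longrightarrow> hty f x y \<Longrightarrow> hty g x y \<Longrightarrow> f \<simeq> g"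
  unfolding teq_def by blast

lemma teq_if_as_eq:
  "as_eq f g \<Longrightarrow> mor_type f \<noteq> None \<Longrightarrow> mor_type g = mor_type f \<Longrightarrow> f \<simeq> g"
  unfolding teq_def hty_iff_mor_type by auto

lemma teq_refl: "mor_type f \<noteq> None \<Longrightarrow> f \<simeq> f"
  by (rule teq_if_hty) (auto intro: as_eq.e_refl)

lemma teq_sym: "f \<simeq> g \<Longrightarrow> g \<simeq> f"
  unfolding teq_def by (blast intro: as_eq.e_sym)

lemma teq_trans [trans]:
  "f \<simeq> g \<Longrightarrow> g \<simeq> h \<Longrightarrow> f \<simeq> h"
  unfolding teq_def hty_iff_mor_type by (auto intro: as_eq.e_trans)

lemma teq_mor_type: "f \<simeq> g \<Longrightarrow> mor_type g = mor_type f"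
  unfolding teq_def hty_iff_mor_type by auto

lemma teq_typed: "f \<simeq> g \<Longrightarrow> mor_type f \<noteq> None"
  unfolding teq_def hty_iff_mor_type by auto

lemma teq_hty: "f \<simeq> g \<Longrightarrow> hty f x y \<longleftrightarrow> hty g x y"
  unfolding hty_iff_mor_type by (simp add: teq_mor_type)

lemma teq_as_eq: "f \<simeq> g \<Longrightarrow> as_eq f g"
  by (simp add: teq_def)

lemma teq_cmp_cong:
  assumes "f \<simeq> f'" "g \<simeq> g'" "mor_type (Cmp f g) \<noteq> None"
  shows "Cmp f g \<simeq> Cmp f' g'"
proof (rule teq_if_hty[OF assms(3)])
  fix x z assume "hty (Cmp f g) x z"
  then obtain y where "hty f y z" "hty g x y" by (rule hty_CmpE)
  then show "as_eq (Cmp f g) (Cmp f' g') \<and> hty (Cmp f' g') x z"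
    using assms by (auto simp: teq_hty intro: as_eq.c_cmp teq_as_eq hty.ty_cmp)
qed

lemma teq_tns_cong:
  assumes "f \<simeq> f'" "g \<simeq> g'"
  shows "Tns f g \<simeq> Tns f' g'"
  using assms unfolding teq_def by (blast intro: as_eq.c_tns hty.ty_tns)

lemma teq_ad_cong:
  assumes "f \<simeq> f'" "g \<simeq> g'" "mor_type (Ad f g) \<noteq> None"
  shows "Ad f g \<simeq> Ad f' g'"
proof (rule teq_if_hty[OF assms(3)])
  fix x y assume "hty (Ad f g) x y"
  then show "as_eq (Ad f g) (Ad f' g') \<and> hty (Ad f' g') x y"
    using assms by (auto simp: teq_hty elim!: hty_AdE intro: as_eq.c_ad teq_as_eq hty.ty_ad)
qed

lemma teq_sm_cong: "f \<simeq> f' \<Longrightarrow> Sm c f \<simeq> Sm c f'"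
  unfolding teq_def by (blast intro: as_eq.c_sm hty.ty_sm)

lemma teq_id_left:
  "mor_type (Cmp (Idm y) f) \<noteq> None \<Longrightarrow> Cmp (Idm y) f \<simeq> f"
  by (rule teq_if_hty) (auto elim!: hty_elims intro: as_eq.cat_idl)

lemma teq_id_right:
  "mor_type (Cmp f (Idm x)) \<noteq> None \<Longrightarrow> Cmp f (Idm x) \<simeq> f"
  by (rule teq_if_hty) (auto elim!: hty_elims intro: as_eq.cat_idr)

lemma teq_cmp_assoc:
  "mor_type (Cmp (Cmp f g) h) \<noteq> None \<Longrightarrow> Cmp (Cmp f g) h \<simeq> Cmp f (Cmp g h)"
  by (rule teq_if_hty) (auto elim!: hty_elims intro: as_eq.cat_assoc hty.intros)

lemma teq_tns_assoc:
  assumes "mor_type (Tns (Tns f g) h) \<noteq> None"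
  shows "Tns (Tns f g) h \<simeq> Tns f (Tns g h)"
proof (rule teq_if_hty[OF assms])
  fix x y assume "hty (Tns (Tns f g) h) x y"
  then obtain x1 x2 x3 y1 y2 y3 where "x = x1 @ x2 @ x3" "y = y1 @ y2 @ y3"
    and "hty f x1 y1" "hty g x2 y2" "hty h x3 y3"
    by (auto elim!: hty_TnsE)
  then show "as_eq (Tns (Tns f g) h) (Tns f (Tns g h)) \<and> hty (Tns f (Tns g h)) x y"
    by (auto intro: as_eq.mon_assoc hty.ty_tns)
qed

lemma teq_unit_left: "mor_type f \<noteq> None \<Longrightarrow> Tns (Idm []) f \<simeq> f"
  by (rule teq_if_hty) (auto elim!: hty_elims intro: as_eq.mon_unitl)

lemma teq_unit_right: "mor_type f \<noteq> None \<Longrightarrow> Tns f (Idm []) \<simeq> f"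
  by (rule teq_if_hty) (auto elim!: hty_elims intro: as_eq.mon_unitr)

lemma teq_tns_Idm:
  "validob x \<Longrightarrow> validob y \<Longrightarrow> z = x @ y \<Longrightarrow> Tns (Idm x) (Idm y) \<simeq> Idm z"
  by (rule teq_if_hty) (auto elim!: hty_elims intro: as_eq.mon_id hty.intros)

lemma teq_interchange:
  "mor_type (Tns (Cmp f g) (Cmp f' g')) \<noteq> None \<Longrightarrow>
   Tns (Cmp f g) (Cmp f' g') \<simeq> Cmp (Tns f f') (Tns g g')"
  by (rule teq_if_hty) (auto elim!: hty_elims intro: as_eq.mon_interchange hty.intros)

lemma teq_add_assoc:
  "mor_type (Ad (Ad f g) h) \<noteq> None \<Longrightarrow> Ad (Ad f g) h \<simeq> Ad f (Ad g h)"
  by (rule teq_if_hty) (auto elim!: hty_elims intro: as_eq.lin_add_assoc hty.intros)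

lemma teq_add_zero: "mor_type f = Some (x, y) \<Longrightarrow> Ad f (Zr x y) \<simeq> f"
  using hty_validob[of f x y] unfolding hty_iff_mor_type[symmetric]
  by (intro teqI[of _ _ x y]) (auto intro: as_eq.lin_add_zero hty.intros)

lemma teq_add_neg: "mor_type f = Some (x, y) \<Longrightarrow> Ad f (Sm (-1) f) \<simeq> Zr x y"
  using hty_validob[of f x y] unfolding hty_iff_mor_type[symmetric]
  by (intro teqI[of _ _ x y]) (auto intro: as_eq.lin_add_neg hty.intros)

lemma teq_cmp_addl:
  "mor_type (Cmp (Ad f f') g) \<noteq> None \<Longrightarrow> Cmp (Ad f f') g \<simeq> Ad (Cmp f g) (Cmp f' g)"
  by (rule teq_if_hty) (auto elim!: hty_elims intro: as_eq.bil_cmp_addl hty.intros)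

lemma teq_cmp_addr:
  "mor_type (Cmp f (Ad g g')) \<noteq> None \<Longrightarrow> Cmp f (Ad g g') \<simeq> Ad (Cmp f g) (Cmp f g')"
  by (rule teq_if_hty) (auto elim!: hty_elims intro: as_eq.bil_cmp_addr hty.intros)

lemma teq_cmp_sml:
  "mor_type (Cmp (Sm c f) g) \<noteq> None \<Longrightarrow> Cmp (Sm c f) g \<simeq> Sm c (Cmp f g)"
  by (rule teq_if_hty) (auto elim!: hty_elims intro: as_eq.bil_cmp_sml hty.intros)

lemma teq_cmp_smr:
  "mor_type (Cmp f (Sm c g)) \<noteq> None \<Longrightarrow> Cmp f (Sm c g) \<simeq> Sm c (Cmp f g)"
  by (rule teq_if_hty) (auto elim!: hty_elims intro: as_eq.bil_cmp_smr hty.intros)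

lemma teq_cmp_zrl:
  "mor_type g = Some (x, y) \<Longrightarrow> validob z \<Longrightarrow> Cmp (Zr y z) g \<simeq> Zr x z"
  using hty_validob[of g x y] unfolding hty_iff_mor_type[symmetric]
  by (intro teqI[of _ _ x z]) (auto intro: as_eq.bil_cmp_zrl hty.intros)

lemma teq_cmp_zrr:
  "mor_type f = Some (y, z) \<Longrightarrow> validob x \<Longrightarrow> Cmp f (Zr x y) \<simeq> Zr x z"
  using hty_validob[of f y z] unfolding hty_iff_mor_type[symmetric]
  by (intro teqI[of _ _ x z]) (auto intro: as_eq.bil_cmp_zrr hty.intros)

lemma teq_tns_addl:
  "mor_type (Tns (Ad f f') g) \<noteq> None \<Longrightarrow> Tns (Ad f f') g \<simeq> Ad (Tns f g) (Tns f' g)"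
  by (rule teq_if_hty) (auto elim!: hty_elims intro: as_eq.bil_tns_addl hty.intros)

lemma teq_tns_addr:
  "mor_type (Tns f (Ad g g')) \<noteq> None \<Longrightarrow> Tns f (Ad g g') \<simeq> Ad (Tns f g) (Tns f g')"
  by (rule teq_if_hty) (auto elim!: hty_elims intro: as_eq.bil_tns_addr hty.intros)

lemma teq_tns_sml:
  "mor_type (Tns (Sm c f) g) \<noteq> None \<Longrightarrow> Tns (Sm c f) g \<simeq> Sm c (Tns f g)"
  by (rule teq_if_hty) (auto elim!: hty_elims intro: as_eq.bil_tns_sml hty.intros)

lemma teq_tns_smr:
  "mor_type (Tns f (Sm c g)) \<noteq> None \<Longrightarrow> Tns f (Sm c g) \<simeq> Sm c (Tns f g)"
  by (rule teq_if_hty) (auto elim!: hty_elims intro: as_eq.bil_tns_smr hty.intros)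

lemma teq_tns_zrl:
  "mor_type g = Some (x', y') \<Longrightarrow> validob x \<Longrightarrow> validob y \<Longrightarrow>
    Tns (Zr x y) g \<simeq> Zr (x @ x') (y @ y')"
  using hty_validob[of g x' y'] unfolding hty_iff_mor_type[symmetric]
  by (intro teqI[of _ _ "x @ x'" "y @ y'"]) (auto intro: as_eq.bil_tns_zrl hty.intros)

lemma teq_tns_zrr:
  "mor_type f = Some (x, y) \<Longrightarrow> validob x' \<Longrightarrow> validob y' \<Longrightarrow>
    Tns f (Zr x' y') \<simeq> Zr (x @ x') (y @ y')"
  using hty_validob[of f x y] unfolding hty_iff_mor_type[symmetric]
  by (intro teqI[of _ _ "x @ x'" "y @ y'"]) (auto intro: as_eq.bil_tns_zrr hty.intros)

lemma teq_Idm_cmp_tns: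
  assumes typed: "mor_type (Cmp f g) \<noteq> None" "validob z"
  shows "Tns (Idm z) (Cmp f g) \<simeq> Cmp (Tns (Idm z) f) (Tns (Idm z) g)"
proof -
  have "Tns (Idm z) (Cmp f g) \<simeq> Tns (Cmp (Idm z) (Idm z)) (Cmp f g)"
    using typed by (intro teq_tns_cong teq_sym[OF teq_id_left] teq_refl) auto
  also have "\<dots> \<simeq> Cmp (Tns (Idm z) f) (Tns (Idm z) g)"
    using typed by (intro teq_interchange) (auto split: option.splits if_splits)
  finally show ?thesis .
qed

lemma teq_cmp_tns_Idm:
  assumes typed: "mor_type (Cmp f g) \<noteq> None" "validob z"
  shows "Tns (Cmp f g) (Idm z) \<simeq> Cmp (Tns f (Idm z)) (Tns g (Idm z))"
proof -
  have "Tns (Cmp f g) (Idm z) \<simeq> Tns (Cmp f g) (Cmp (Idm z) (Idm z))"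
    using typed by (intro teq_tns_cong teq_sym[OF teq_id_left] teq_refl) auto
  also have "\<dots> \<simeq> Cmp (Tns f (Idm z)) (Tns g (Idm z))"
    using typed by (intro teq_interchange) (auto split: option.splits if_splits)
  finally show ?thesis .
qed

lemma teq_tns_slide_right:
  assumes "Cmp p h \<simeq> Cmp h' q" and "mor_type f = Some (x, y)"
  shows "Cmp (Tns f p) (Tns (Idm x) h) \<simeq> Cmp (Tns (Idm y) h') (Tns f q)"
proof -
  have typed: "mor_type (Cmp p h) \<noteq> None" "mor_type (Cmp h' q) \<noteq> None" "validob x" "validob y"
    using teq_typed[OF assms(1)] teq_typed[OF teq_sym[OF assms(1)]] mor_type_validob[OF assms(2)]
    by auto
  have "Cmp (Tns f p) (Tns (Idm x) h) \<simeq> Tns (Cmp f (Idm x)) (Cmp p h)"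
    using typed assms(2) by (intro teq_sym[OF teq_interchange]) (auto split: option.splits if_splits)
  also have "\<dots> \<simeq> Tns f (Cmp h' q)"
    using typed assms by (intro teq_tns_cong teq_id_right) auto
  also have "\<dots> \<simeq> Tns (Cmp (Idm y) f) (Cmp h' q)"
    using typed assms by (intro teq_tns_cong teq_sym[OF teq_id_left] teq_refl) auto
  also have "\<dots> \<simeq> Cmp (Tns (Idm y) h') (Tns f q)"
    using typed assms by (intro teq_interchange) (auto split: option.splits if_splits)
  finally show ?thesis .
qed

lemma teq_tns_slide_left:
  assumes "Cmp p h \<simeq> Cmp h' q" and "mor_type g = Some (x, y)"
  shows "Cmp (Tns p g) (Tns h (Idm x)) \<simeq> Cmp (Tns h' (Idm y)) (Tns q g)"
proof -
  have typed: "mor_type (Cmp p h) \<noteq> None" "mor_type (Cmp h' q) \<noteq> None" "validob x" "validob y"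
    using teq_typed[OF assms(1)] teq_typed[OF teq_sym[OF assms(1)]] mor_type_validob[OF assms(2)]
    by auto
  have "Cmp (Tns p g) (Tns h (Idm x)) \<simeq> Tns (Cmp p h) (Cmp g (Idm x))"
    using typed assms(2) by (intro teq_sym[OF teq_interchange]) (auto split: option.splits if_splits)
  also have "\<dots> \<simeq> Tns (Cmp h' q) g"
    using typed assms by (intro teq_tns_cong teq_id_right) auto
  also have "\<dots> \<simeq> Tns (Cmp h' q) (Cmp (Idm y) g)"
    using typed assms by (intro teq_tns_cong teq_sym[OF teq_id_left] teq_refl) auto
  also have "\<dots> \<simeq> Cmp (Tns h' (Idm y)) (Tns q g)"
    using typed assms by (intro teq_interchange) (auto split: option.splits if_splits)
  finally show ?thesis .
qed

lemma teq_add_cancel: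
  assumes "mor_type f = Some (x, y)" and "mor_type g = Some (x, y)"
  shows "f \<simeq> Ad (Ad f g) (Sm (-1) g)"
proof -
  have "validob x" "validob y"
    using mor_type_validob[OF assms(1)] by auto
  have "f \<simeq> Ad f (Zr x y)"
    using assms by (intro teq_sym[OF teq_add_zero])
  also have "\<dots> \<simeq> Ad f (Ad g (Sm (-1) g))"
    using assms \<open>validob x\<close> \<open>validob y\<close>
    by (intro teq_ad_cong teq_refl teq_sym[OF teq_add_neg]) auto
  also have "\<dots> \<simeq> Ad (Ad f g) (Sm (-1) g)"
    using assms by (intro teq_sym[OF teq_add_assoc]) auto
  finally show ?thesis .
qed

section \<open>Traversing black words with a red strand\<close>

fun black_word :: "'k ob list \<Rightarrow> bool" where
  "black_word [] = True"
| "black_word (Blk n # x) \<longleftrightarrow> n \<ge> 1 \<and> black_word x"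
| "black_word (Red v # x) = False"

lemma black_word_append [simp]:
  "black_word (x @ y) \<longleftrightarrow> black_word x \<and> black_word y"
  by (induction x rule: black_word.induct) auto

lemma black_word_validob [simp]: "black_word x \<Longrightarrow> validob x"
  by (induction x rule: black_word.induct) auto

lemma bk_simps [simp]: "bk 0 = []" "a \<ge> 1 \<Longrightarrow> bk a = [Blk a]"
  by (auto simp: bk_def)

lemma black_word_bk [simp]: "black_word (bk a)"
  by (simp add: bk_def)

definition whisker_ob :: "bool \<Rightarrow> 'k \<Rightarrow> 'k ob list \<Rightarrow> 'k ob list" where
  "whisker_ob left u x = (if left then Red u # x else x @ [Red u])"

definition whisker :: "bool \<Rightarrow> 'k \<Rightarrow> 'k mor \<Rightarrow> 'k mor" where
  "whisker left u f = (if left then Tns (Idm [Red u]) f else Tns f (Idm [Red u]))"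

lemma mor_type_whisker [simp]:
  "mor_type (whisker left u f) = map_option (map_prod (whisker_ob left u) (whisker_ob left u)) (mor_type f)"
  by (auto simp: whisker_def whisker_ob_def split: option.splits)

lemma validob_whisker_ob [simp]: "validob (whisker_ob left u x) \<longleftrightarrow> validob x"
  by (simp add: whisker_ob_def)

lemma whisker_cong: "f \<simeq> g \<Longrightarrow> whisker left u f \<simeq> whisker left u g"
  unfolding whisker_def by (auto intro!: teq_tns_cong teq_refl)

lemma whisker_Idm:
  "validob x \<Longrightarrow> whisker left u (Idm x) \<simeq> Idm (whisker_ob left u x)"
  unfolding whisker_def whisker_ob_def by (auto intro: teq_tns_Idm)

lemma whisker_cmp: "mor_type (Cmp f g) \<noteq> None \<Longrightarrow>
    whisker left u (Cmp f g) \<simeq> Cmp (whisker left u f) (whisker left u g)"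
  unfolding whisker_def by (auto intro: teq_Idm_cmp_tns teq_cmp_tns_Idm)

lemma whisker_ad: "mor_type (Ad f g) \<noteq> None \<Longrightarrow>
    whisker left u (Ad f g) \<simeq> Ad (whisker left u f) (whisker left u g)"
  unfolding whisker_def by (auto intro: teq_tns_addl teq_tns_addr)

lemma whisker_sm:
  "mor_type f \<noteq> None \<Longrightarrow> whisker left u (Sm c f) \<simeq> Sm c (whisker left u f)"
  unfolding whisker_def by (auto intro: teq_tns_sml teq_tns_smr)

lemma whisker_zr: "validob x \<Longrightarrow> validob y \<Longrightarrow>
    whisker left u (Zr x y) \<simeq> Zr (whisker_ob left u x) (whisker_ob left u y)"
  unfolding whisker_def whisker_ob_def
  using teq_tns_zrr[of "Idm [Red u]" "[Red u]" "[Red u]" x y] teq_tns_zrl[of "Idm [Red u]" "[Red u]" "[Red u]" x y]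
  by auto

lemma teq_Idm_append_tns:
  assumes "validob x" "validob y" "mor_type f \<noteq> None" "z = x @ y"
  shows "Tns (Idm z) f \<simeq> Tns (Idm x) (Tns (Idm y) f)"
proof -
  have "Tns (Idm z) f \<simeq> Tns (Tns (Idm x) (Idm y)) f"
    using assms by (intro teq_tns_cong teq_sym[OF teq_tns_Idm] teq_refl) auto
  also have "\<dots> \<simeq> Tns (Idm x) (Tns (Idm y) f)"
    using assms by (intro teq_tns_assoc) (auto split: option.splits)
  finally show ?thesis .
qed

lemma teq_tns_Idm_append:
  assumes "validob x" "validob y" "mor_type f \<noteq> None" "z = x @ y"
  shows "Tns (Tns f (Idm x)) (Idm y) \<simeq> Tns f (Idm z)"
proof -
  have "Tns (Tns f (Idm x)) (Idm y) \<simeq> Tns f (Tns (Idm x) (Idm y))"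
    using assms by (intro teq_tns_assoc) (auto split: option.splits)
  also have "\<dots> \<simeq> Tns f (Idm z)"
    using assms by (intro teq_tns_cong teq_tns_Idm teq_refl) auto
  finally show ?thesis .
qed

lemma black_word_ConsD: "black_word (c # x) \<Longrightarrow> black_word x"
  by (cases c) auto

fun downs :: "'k \<Rightarrow> 'k ob list \<Rightarrow> 'k mor" where
  "downs u [] = Idm [Red u]"
| "downs u [Blk a] = Dn u a"
| "downs u (Blk a # c # x) = Cmp (Tns (Idm [Blk a]) (downs u (c # x))) (Tns (Dn u a) (Idm (c # x)))"
| "downs u (Red v # x) = Idm []"

fun ups :: "'k \<Rightarrow> 'k ob list \<Rightarrow> 'k mor" where
  "ups u [] = Idm [Red u]"
| "ups u [Blk a] = Up a u"
| "ups u (Blk a # c # x) = Cmp (Tns (Up a u) (Idm (c # x))) (Tns (Idm [Blk a]) (ups u (c # x)))"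
| "ups u (Red v # x) = Idm []"

lemma mor_type_downs [simp]:
  "black_word x \<Longrightarrow> mor_type (downs u x) = Some (Red u # x, x @ [Red u])"
  by (induction u x rule: downs.induct) (auto dest: black_word_ConsD)

lemma mor_type_ups [simp]:
  "black_word x \<Longrightarrow> mor_type (ups u x) = Some (x @ [Red u], Red u # x)"
  by (induction u x rule: ups.induct) (auto dest: black_word_ConsD)

lemma downs_Cons:
  assumes "black_word (Blk a # x)"
  shows "downs u (Blk a # x) \<simeq> Cmp (Tns (Idm [Blk a]) (downs u x)) (Tns (Dn u a) (Idm x))"
proof (cases x)
  case Nil
  have "Cmp (Tns (Idm [Blk a]) (Idm [Red u])) (Tns (Dn u a) (Idm [])) \<simeq> Cmp (Idm [Blk a, Red u]) (Dn u a)"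
    using assms Nil by (intro teq_cmp_cong teq_tns_Idm teq_unit_right) auto
  also have "\<dots> \<simeq> Dn u a"
    using assms Nil by (intro teq_id_left) auto
  finally show ?thesis
    using Nil by (simp add: teq_sym)
next
  case (Cons c x')
  then show ?thesis
    using assms by (cases c) (auto intro: teq_refl)
qed

lemma ups_Cons:
  assumes "black_word (Blk a # x)"
  shows "ups u (Blk a # x) \<simeq> Cmp (Tns (Up a u) (Idm x)) (Tns (Idm [Blk a]) (ups u x))"
proof (cases x)
  case Nil
  have "Cmp (Tns (Up a u) (Idm [])) (Tns (Idm [Blk a]) (Idm [Red u])) \<simeq> Cmp (Up a u) (Idm [Blk a, Red u])"
    using assms Nil by (intro teq_cmp_cong teq_tns_Idm teq_unit_right) auto
  also have "\<dots> \<simeq> Up a u"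
    using assms Nil by (intro teq_id_right) auto
  finally show ?thesis
    using Nil by (simp add: teq_sym)
next
  case (Cons c x')
  then show ?thesis
    using assms by (cases c) (auto intro: teq_refl)
qed

lemma downs_append:
  "black_word x \<Longrightarrow> black_word x' \<Longrightarrow>
   downs u (x @ x') \<simeq> Cmp (Tns (Idm x) (downs u x')) (Tns (downs u x) (Idm x'))"
proof (induction x)
  case Nil
  have "Cmp (Tns (Idm []) (downs u x')) (Tns (Idm [Red u]) (Idm x')) \<simeq> Cmp (downs u x') (Idm (Red u # x'))"
    using Nil by (intro teq_cmp_cong teq_unit_left teq_tns_Idm) auto
  also have "\<dots> \<simeq> downs u x'"
    using Nil by (intro teq_id_right) auto
  finally show ?case
    by (simp add: teq_sym)
next
  case (Cons c x)
  then obtain a where c: "c = Blk a" and words: "a \<ge> 1" "black_word x" "black_word x'"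
    by (cases c) auto
  let ?D = "downs u x'" and ?E = "downs u x"
  have "downs u (c # x @ x') \<simeq> Cmp (Tns (Idm [Blk a]) (downs u (x @ x'))) (Tns (Dn u a) (Idm (x @ x')))"
    unfolding c using words by (intro downs_Cons) auto
  also have "\<dots> \<simeq> Cmp (Tns (Idm [Blk a]) (Cmp (Tns (Idm x) ?D) (Tns ?E (Idm x')))) (Tns (Dn u a) (Idm (x @ x')))"
    using Cons words by (intro teq_cmp_cong teq_tns_cong teq_refl) auto
  also have "\<dots> \<simeq> Cmp (Cmp (Tns (Idm [Blk a]) (Tns (Idm x) ?D)) (Tns (Idm [Blk a]) (Tns ?E (Idm x'))))
                      (Tns (Dn u a) (Idm (x @ x')))"
    using words by (intro teq_cmp_cong teq_Idm_cmp_tns teq_refl) auto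
  also have "\<dots> \<simeq> Cmp (Tns (Idm (c # x)) ?D) (Cmp (Tns (Tns (Idm [Blk a]) ?E) (Idm x')) (Tns (Tns (Dn u a) (Idm x)) (Idm x')))"
    using words unfolding c
    by (intro teq_trans[OF teq_cmp_assoc] teq_cmp_cong teq_sym[OF teq_Idm_append_tns]
        teq_sym[OF teq_tns_assoc] teq_sym[OF teq_tns_Idm_append]) auto
  also have "\<dots> \<simeq> Cmp (Tns (Idm (c # x)) ?D) (Tns (downs u (c # x)) (Idm x'))"
  proof -
    have "Tns (downs u (c # x)) (Idm x') \<simeq> Tns (Cmp (Tns (Idm [Blk a]) ?E) (Tns (Dn u a) (Idm x))) (Idm x')"
      unfolding c using words by (intro teq_tns_cong downs_Cons teq_refl) auto
    also have "\<dots> \<simeq> Cmp (Tns (Tns (Idm [Blk a]) ?E) (Idm x')) (Tns (Tns (Dn u a) (Idm x)) (Idm x'))"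
      using words by (intro teq_cmp_tns_Idm) auto
    finally show ?thesis
      using c words by (intro teq_cmp_cong[OF teq_refl teq_sym]) auto
  qed
  finally show ?case
    by simp
qed

lemma ups_append:
  "black_word x \<Longrightarrow> black_word x' \<Longrightarrow>
   ups u (x @ x') \<simeq> Cmp (Tns (ups u x) (Idm x')) (Tns (Idm x) (ups u x'))"
proof (induction x)
  case Nil
  have "Cmp (Tns (Idm [Red u]) (Idm x')) (Tns (Idm []) (ups u x')) \<simeq> Cmp (Idm (Red u # x')) (ups u x')"
    using Nil by (intro teq_cmp_cong teq_unit_left teq_tns_Idm) auto
  also have "\<dots> \<simeq> ups u x'"
    using Nil by (intro teq_id_left) auto
  finally show ?case
    by (simp add: teq_sym)
next
  case (Cons c x)
  then obtain a where c: "c = Blk a" and words: "a \<ge> 1" "black_word x" "black_word x'"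
    by (cases c) auto
  let ?U = "ups u x'" and ?V = "ups u x"
  have "ups u (c # x @ x') \<simeq> Cmp (Tns (Up a u) (Idm (x @ x'))) (Tns (Idm [Blk a]) (ups u (x @ x')))"
    unfolding c using words by (intro ups_Cons) auto
  also have "\<dots> \<simeq> Cmp (Tns (Up a u) (Idm (x @ x'))) (Tns (Idm [Blk a]) (Cmp (Tns ?V (Idm x')) (Tns (Idm x) ?U)))"
    using Cons words by (intro teq_cmp_cong teq_tns_cong teq_refl) auto
  also have "\<dots> \<simeq> Cmp (Tns (Up a u) (Idm (x @ x')))
                      (Cmp (Tns (Idm [Blk a]) (Tns ?V (Idm x'))) (Tns (Idm [Blk a]) (Tns (Idm x) ?U)))"
    using words by (intro teq_cmp_cong teq_Idm_cmp_tns teq_refl) auto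
  also have "\<dots> \<simeq> Cmp (Cmp (Tns (Tns (Up a u) (Idm x)) (Idm x')) (Tns (Tns (Idm [Blk a]) ?V) (Idm x'))) (Tns (Idm (c # x)) ?U)"
    using words unfolding c
    by (intro teq_trans[OF teq_sym[OF teq_cmp_assoc]] teq_cmp_cong teq_sym[OF teq_Idm_append_tns]
        teq_sym[OF teq_tns_assoc] teq_sym[OF teq_tns_Idm_append]) auto
  also have "\<dots> \<simeq> Cmp (Tns (ups u (c # x)) (Idm x')) (Tns (Idm (c # x)) ?U)"
  proof -
    have "Tns (ups u (c # x)) (Idm x') \<simeq> Tns (Cmp (Tns (Up a u) (Idm x)) (Tns (Idm [Blk a]) ?V)) (Idm x')"
      unfolding c using words by (intro teq_tns_cong ups_Cons teq_refl) auto
    also have "\<dots> \<simeq> Cmp (Tns (Tns (Up a u) (Idm x)) (Idm x')) (Tns (Tns (Idm [Blk a]) ?V) (Idm x'))"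
      using words by (intro teq_cmp_tns_Idm) auto
    finally show ?thesis
      using c words by (intro teq_cmp_cong[OF teq_sym teq_refl]) auto
  qed
  finally show ?case
    by simp
qed

definition traverse :: "bool \<Rightarrow> 'k \<Rightarrow> 'k ob list \<Rightarrow> 'k mor" where
  "traverse down u x = (if down then downs u x else ups u x)"

lemma mor_type_traverse [simp]:
  "black_word x \<Longrightarrow> mor_type (traverse down u x) = Some (whisker_ob down u x, whisker_ob (\<not> down) u x)"
  by (simp add: traverse_def whisker_ob_def)

text \<open>traverse_natural True u f x y states (f \<otimes> 1_u) D_x = D_y (1_u \<otimes> f) for f : x -> y;
  traverse_natural False u f x y states (1_u \<otimes> f) U_x = U_y (f \<otimes> 1_u).\<close>

definition traverse_natural :: "bool \<Rightarrow> 'k::comm_ring_1 \<Rightarrow> 'k mor \<Rightarrow> 'k ob list \<Rightarrow> 'k ob list \<Rightarrow> bool" where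
  "traverse_natural down u f x y \<longleftrightarrow> black_word x \<and> black_word y \<and> mor_type f = Some (x, y) \<and>
     Cmp (whisker (\<not> down) u f) (traverse down u x) \<simeq> Cmp (traverse down u y) (whisker down u f)"

lemma traverse_natural_cong:
  assumes "traverse_natural down u f x y" and "f \<simeq> g"
  shows "traverse_natural down u g x y"
proof -
  have typed: "black_word x" "black_word y" "mor_type f = Some (x, y)" "mor_type g = Some (x, y)"
    using assms teq_mor_type[OF assms(2)] unfolding traverse_natural_def by auto
  have "Cmp (whisker (\<not> down) u g) (traverse down u x) \<simeq> Cmp (whisker (\<not> down) u f) (traverse down u x)"
    using typed by (intro teq_cmp_cong[OF whisker_cong[OF teq_sym[OF assms(2)]] teq_refl]) auto
  also have "\<dots> \<simeq> Cmp (traverse down u y) (whisker down u f)"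
    using assms(1) unfolding traverse_natural_def by auto
  also have "\<dots> \<simeq> Cmp (traverse down u y) (whisker down u g)"
    using typed by (intro teq_cmp_cong[OF teq_refl whisker_cong[OF assms(2)]]) auto
  finally show ?thesis
    using typed unfolding traverse_natural_def by auto
qed

lemma traverse_natural_Idm:
  assumes "black_word x"
  shows "traverse_natural down u (Idm x) x x"
proof -
  have "Cmp (whisker (\<not> down) u (Idm x)) (traverse down u x) \<simeq> Cmp (Idm (whisker_ob (\<not> down) u x)) (traverse down u x)"
    using assms by (intro teq_cmp_cong whisker_Idm teq_refl) auto
  also have "\<dots> \<simeq> traverse down u x"
    using assms by (intro teq_id_left) auto
  also have "\<dots> \<simeq> Cmp (traverse down u x) (Idm (whisker_ob down u x))"
    using assms by (intro teq_sym[OF teq_id_right]) auto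
  also have "\<dots> \<simeq> Cmp (traverse down u x) (whisker down u (Idm x))"
    using assms by (intro teq_cmp_cong teq_refl teq_sym[OF whisker_Idm]) auto
  finally show ?thesis
    using assms unfolding traverse_natural_def by auto
qed

lemma traverse_natural_cmp:
  assumes f: "traverse_natural down u f y z" and g: "traverse_natural down u g x y"
  shows "traverse_natural down u (Cmp f g) x z"
proof -
  let ?W = "whisker down u" and ?W' = "whisker (\<not> down) u" and ?T = "traverse down u"
  have typed: "black_word x" "black_word y" "black_word z" "mor_type f = Some (y, z)" "mor_type g = Some (x, y)"
    and nat_f: "Cmp (?W' f) (?T y) \<simeq> Cmp (?T z) (?W f)"
    and nat_g: "Cmp (?W' g) (?T x) \<simeq> Cmp (?T y) (?W g)"
    using f g unfolding traverse_natural_def by auto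
  have "Cmp (?W' (Cmp f g)) (?T x) \<simeq> Cmp (Cmp (?W' f) (?W' g)) (?T x)"
    using typed by (intro teq_cmp_cong whisker_cmp teq_refl) auto
  also have "\<dots> \<simeq> Cmp (?W' f) (Cmp (?W' g) (?T x))"
    using typed by (intro teq_cmp_assoc) auto
  also have "\<dots> \<simeq> Cmp (?W' f) (Cmp (?T y) (?W g))"
    using typed by (intro teq_cmp_cong[OF teq_refl nat_g]) auto
  also have "\<dots> \<simeq> Cmp (Cmp (?W' f) (?T y)) (?W g)"
    using typed by (intro teq_sym[OF teq_cmp_assoc]) auto
  also have "\<dots> \<simeq> Cmp (Cmp (?T z) (?W f)) (?W g)"
    using typed by (intro teq_cmp_cong[OF nat_f teq_refl]) auto
  also have "\<dots> \<simeq> Cmp (?T z) (Cmp (?W f) (?W g))"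
    using typed by (intro teq_cmp_assoc) auto
  also have "\<dots> \<simeq> Cmp (?T z) (?W (Cmp f g))"
    using typed by (intro teq_cmp_cong[OF teq_refl teq_sym[OF whisker_cmp]]) auto
  finally show ?thesis
    using typed unfolding traverse_natural_def by auto
qed

lemma traverse_natural_ad:
  assumes f: "traverse_natural down u f x y" and g: "traverse_natural down u g x y"
  shows "traverse_natural down u (Ad f g) x y"
proof -
  let ?W = "whisker down u" and ?W' = "whisker (\<not> down) u" and ?T = "traverse down u"
  have typed: "black_word x" "black_word y" "mor_type f = Some (x, y)" "mor_type g = Some (x, y)"
    and nat_f: "Cmp (?W' f) (?T x) \<simeq> Cmp (?T y) (?W f)"
    and nat_g: "Cmp (?W' g) (?T x) \<simeq> Cmp (?T y) (?W g)"
    using f g unfolding traverse_natural_def by auto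
  have "Cmp (?W' (Ad f g)) (?T x) \<simeq> Cmp (Ad (?W' f) (?W' g)) (?T x)"
    using typed by (intro teq_cmp_cong whisker_ad teq_refl) auto
  also have "\<dots> \<simeq> Ad (Cmp (?W' f) (?T x)) (Cmp (?W' g) (?T x))"
    using typed by (intro teq_cmp_addl) auto
  also have "\<dots> \<simeq> Ad (Cmp (?T y) (?W f)) (Cmp (?T y) (?W g))"
    using typed by (intro teq_ad_cong[OF nat_f nat_g]) auto
  also have "\<dots> \<simeq> Cmp (?T y) (Ad (?W f) (?W g))"
    using typed by (intro teq_sym[OF teq_cmp_addr]) auto
  also have "\<dots> \<simeq> Cmp (?T y) (?W (Ad f g))"
    using typed by (intro teq_cmp_cong[OF teq_refl teq_sym[OF whisker_ad]]) auto
  finally show ?thesis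
    using typed unfolding traverse_natural_def by auto
qed

lemma traverse_natural_sm:
  assumes f: "traverse_natural down u f x y"
  shows "traverse_natural down u (Sm c f) x y"
proof -
  let ?W = "whisker down u" and ?W' = "whisker (\<not> down) u" and ?T = "traverse down u"
  have typed: "black_word x" "black_word y" "mor_type f = Some (x, y)"
    and nat_f: "Cmp (?W' f) (?T x) \<simeq> Cmp (?T y) (?W f)"
    using f unfolding traverse_natural_def by auto
  have "Cmp (?W' (Sm c f)) (?T x) \<simeq> Cmp (Sm c (?W' f)) (?T x)"
    using typed by (intro teq_cmp_cong whisker_sm teq_refl) auto
  also have "\<dots> \<simeq> Sm c (Cmp (?W' f) (?T x))"
    using typed by (intro teq_cmp_sml) auto
  also have "\<dots> \<simeq> Sm c (Cmp (?T y) (?W f))"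
    by (intro teq_sm_cong[OF nat_f])
  also have "\<dots> \<simeq> Cmp (?T y) (Sm c (?W f))"
    using typed by (intro teq_sym[OF teq_cmp_smr]) auto
  also have "\<dots> \<simeq> Cmp (?T y) (?W (Sm c f))"
    using typed by (intro teq_cmp_cong[OF teq_refl teq_sym[OF whisker_sm]]) auto
  finally show ?thesis
    using typed unfolding traverse_natural_def by auto
qed

lemma traverse_natural_zr:
  assumes "black_word x" and "black_word y"
  shows "traverse_natural down u (Zr x y) x y"
proof -
  let ?W = "whisker down u" and ?W' = "whisker (\<not> down) u" and ?T = "traverse down u"
  have "Cmp (?W' (Zr x y)) (?T x) \<simeq> Cmp (Zr (whisker_ob (\<not> down) u x) (whisker_ob (\<not> down) u y)) (?T x)"
    using assms by (intro teq_cmp_cong whisker_zr teq_refl) auto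
  also have "\<dots> \<simeq> Zr (whisker_ob down u x) (whisker_ob (\<not> down) u y)"
    using assms by (intro teq_cmp_zrl) auto
  also have "\<dots> \<simeq> Cmp (?T y) (Zr (whisker_ob down u x) (whisker_ob down u y))"
    using assms by (intro teq_sym[OF teq_cmp_zrr]) auto
  also have "\<dots> \<simeq> Cmp (?T y) (?W (Zr x y))"
    using assms by (intro teq_cmp_cong[OF teq_refl teq_sym[OF whisker_zr]]) auto
  finally show ?thesis
    using assms unfolding traverse_natural_def by auto
qed

lemma msum_Nil [simp]: "msum x y [] = Zr x y"
  by (simp add: msum_def)

lemma msum_Cons [simp]: "msum x y (t # ts) = Ad t (msum x y ts)"
  by (simp add: msum_def)

lemma traverse_natural_msum:
  "black_word x \<Longrightarrow> black_word y \<Longrightarrow> (\<And>t. t \<in> set ts \<Longrightarrow> traverse_natural down u t x y) \<Longrightarrow>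
   traverse_natural down u (msum x y ts) x y"
  by (induction ts) (auto intro: traverse_natural_zr traverse_natural_ad)

lemma downs_natural_tns:
  assumes words: "black_word x" "black_word x'" "black_word y" "black_word y'"
    and typed: "mor_type f = Some (x, y)" "mor_type g = Some (x', y')"
    and nat_f: "Cmp (Tns f (Idm [Red u])) (downs u x) \<simeq> Cmp (downs u y) (Tns (Idm [Red u]) f)"
    and nat_g: "Cmp (Tns g (Idm [Red u])) (downs u x') \<simeq> Cmp (downs u y') (Tns (Idm [Red u]) g)"
  shows "Cmp (Tns (Tns f g) (Idm [Red u])) (downs u (x @ x')) \<simeq>
         Cmp (downs u (y @ y')) (Tns (Idm [Red u]) (Tns f g))"
proof -
  let ?R = "Idm [Red u]"
  have "Cmp (Tns (Tns f g) ?R) (downs u (x @ x')) \<simeq>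
        Cmp (Cmp (Tns f (Tns g ?R)) (Tns (Idm x) (downs u x'))) (Tns (downs u x) (Idm x'))"
    using words typed
    by (intro teq_trans[OF teq_cmp_cong[OF teq_tns_assoc downs_append] teq_sym[OF teq_cmp_assoc]]) auto
  also have "\<dots> \<simeq> Cmp (Cmp (Tns (Idm y) (downs u y')) (Tns f (Tns ?R g))) (Tns (downs u x) (Idm x'))"
    using words typed by (intro teq_cmp_cong[OF teq_tns_slide_right[OF nat_g] teq_refl]) auto
  also have "\<dots> \<simeq> Cmp (Tns (Idm y) (downs u y')) (Cmp (Tns (Tns f ?R) g) (Tns (downs u x) (Idm x')))"
    using words typed
    by (intro teq_trans[OF teq_cmp_assoc teq_cmp_cong[OF teq_refl teq_cmp_cong[OF teq_sym[OF teq_tns_assoc] teq_refl]]]) auto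
  also have "\<dots> \<simeq> Cmp (Tns (Idm y) (downs u y')) (Cmp (Tns (downs u y) (Idm y')) (Tns (Tns ?R f) g))"
    using words typed by (intro teq_cmp_cong[OF teq_refl teq_tns_slide_left[OF nat_f]]) auto
  also have "\<dots> \<simeq> Cmp (downs u (y @ y')) (Tns ?R (Tns f g))"
    using words typed
    by (intro teq_trans[OF teq_sym[OF teq_cmp_assoc] teq_cmp_cong[OF teq_sym[OF downs_append] teq_tns_assoc]]) auto
  finally show ?thesis .
qed

lemma ups_natural_tns:
  assumes words: "black_word x" "black_word x'" "black_word y" "black_word y'"
    and typed: "mor_type f = Some (x, y)" "mor_type g = Some (x', y')"
    and nat_f: "Cmp (Tns (Idm [Red u]) f) (ups u x) \<simeq> Cmp (ups u y) (Tns f (Idm [Red u]))"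
    and nat_g: "Cmp (Tns (Idm [Red u]) g) (ups u x') \<simeq> Cmp (ups u y') (Tns g (Idm [Red u]))"
  shows "Cmp (Tns (Idm [Red u]) (Tns f g)) (ups u (x @ x')) \<simeq>
         Cmp (ups u (y @ y')) (Tns (Tns f g) (Idm [Red u]))"
proof -
  let ?R = "Idm [Red u]"
  have "Cmp (Tns ?R (Tns f g)) (ups u (x @ x')) \<simeq>
        Cmp (Cmp (Tns (Tns ?R f) g) (Tns (ups u x) (Idm x'))) (Tns (Idm x) (ups u x'))"
    using words typed
    by (intro teq_trans[OF teq_cmp_cong[OF teq_sym[OF teq_tns_assoc] ups_append] teq_sym[OF teq_cmp_assoc]]) auto
  also have "\<dots> \<simeq> Cmp (Cmp (Tns (ups u y) (Idm y')) (Tns (Tns f ?R) g)) (Tns (Idm x) (ups u x'))"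
    using words typed by (intro teq_cmp_cong[OF teq_tns_slide_left[OF nat_f] teq_refl]) auto
  also have "\<dots> \<simeq> Cmp (Tns (ups u y) (Idm y')) (Cmp (Tns f (Tns ?R g)) (Tns (Idm x) (ups u x')))"
    using words typed
    by (intro teq_trans[OF teq_cmp_assoc teq_cmp_cong[OF teq_refl teq_cmp_cong[OF teq_tns_assoc teq_refl]]]) auto
  also have "\<dots> \<simeq> Cmp (Tns (ups u y) (Idm y')) (Cmp (Tns (Idm y) (ups u y')) (Tns f (Tns g ?R)))"
    using words typed by (intro teq_cmp_cong[OF teq_refl teq_tns_slide_right[OF nat_g]]) auto
  also have "\<dots> \<simeq> Cmp (ups u (y @ y')) (Tns (Tns f g) ?R)"
    using words typed
    by (intro teq_trans[OF teq_sym[OF teq_cmp_assoc] teq_cmp_cong[OF teq_sym[OF ups_append] teq_sym[OF teq_tns_assoc]]]) auto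
  finally show ?thesis .
qed

lemma traverse_natural_tns:
  assumes "traverse_natural down u f x y" and "traverse_natural down u g x' y'"
  shows "traverse_natural down u (Tns f g) (x @ x') (y @ y')"
  using assms downs_natural_tns[of x x' y y' f g u] ups_natural_tns[of x x' y y' f g u]
  unfolding traverse_natural_def whisker_def traverse_def by (cases down) auto

section \<open>Merges, splits and crossings are natural\<close>

lemma traverse_natural_cancel:
  assumes "traverse_natural down u (Ad f g) x y" and "traverse_natural down u g x y"
  shows "traverse_natural down u f x y"
proof -
  have "mor_type f = Some (x, y)" "mor_type g = Some (x, y)"
    using assms unfolding traverse_natural_def by (auto split: if_splits)
  then have "Ad (Ad f g) (Sm (-1) g) \<simeq> f"
    by (intro teq_sym[OF teq_add_cancel])
  then show ?thesis
    using assms by (blast intro: traverse_natural_cong traverse_natural_ad traverse_natural_sm)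
qed

lemma traverse_natural_Mg:
  assumes "a \<ge> 1" "b \<ge> 1"
  shows "traverse_natural down u (Mg a b) [Blk a, Blk b] [Blk (a + b)]"
proof (cases down)
  case True
  have R9c: "as_eq (Cmp (Dn u (a + b)) (Tns (Idm [Red u]) (Mg a b)))
      (Cmp (Cmp (Tns (Mg a b) (Idm [Red u])) (Tns (Idm [Blk a]) (Dn u b))) (Tns (Dn u a) (Idm [Blk b])))"
    using as_eq.R9c[OF assms, of u] assms by (simp add: mD_def mM_def idb_def)
  have "Cmp (Tns (Mg a b) (Idm [Red u])) (downs u [Blk a, Blk b]) \<simeq>
        Cmp (Cmp (Tns (Mg a b) (Idm [Red u])) (Tns (Idm [Blk a]) (Dn u b))) (Tns (Dn u a) (Idm [Blk b]))"
    unfolding downs.simps using assms by (intro teq_sym[OF teq_cmp_assoc]) auto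
  also have "\<dots> \<simeq> Cmp (Dn u (a + b)) (Tns (Idm [Red u]) (Mg a b))"
    using assms by (intro teq_sym[OF teq_if_as_eq[OF R9c]]) auto
  finally show ?thesis
    using True assms unfolding traverse_natural_def whisker_def traverse_def by simp
next
  case False
  have R9d: "as_eq (Cmp (Up (a + b) u) (Tns (Mg a b) (Idm [Red u])))
      (Cmp (Cmp (Tns (Idm [Red u]) (Mg a b)) (Tns (Up a u) (Idm [Blk b]))) (Tns (Idm [Blk a]) (Up b u)))"
    using as_eq.R9d[OF assms, of u] assms by (simp add: mU_def mM_def idb_def)
  have "Cmp (Tns (Idm [Red u]) (Mg a b)) (ups u [Blk a, Blk b]) \<simeq>
        Cmp (Cmp (Tns (Idm [Red u]) (Mg a b)) (Tns (Up a u) (Idm [Blk b]))) (Tns (Idm [Blk a]) (Up b u))"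
    unfolding ups.simps using assms by (intro teq_sym[OF teq_cmp_assoc]) auto
  also have "\<dots> \<simeq> Cmp (Up (a + b) u) (Tns (Mg a b) (Idm [Red u]))"
    using assms by (intro teq_sym[OF teq_if_as_eq[OF R9d]]) auto
  finally show ?thesis
    using False assms unfolding traverse_natural_def whisker_def traverse_def by simp
qed

lemma traverse_natural_Sp:
  assumes "a \<ge> 1" "b \<ge> 1"
  shows "traverse_natural down u (Sp a b) [Blk (a + b)] [Blk a, Blk b]"
proof (cases down)
  case True
  have "as_eq (Cmp (Tns (Sp a b) (Idm [Red u])) (Dn u (a + b)))
      (Cmp (Cmp (Tns (Idm [Blk a]) (Dn u b)) (Tns (Dn u a) (Idm [Blk b]))) (Tns (Idm [Red u]) (Sp a b)))"
    using as_eq.R9b[OF assms, of u] assms by (simp add: mD_def mS_def idb_def)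
  then have "Cmp (Tns (Sp a b) (Idm [Red u])) (Dn u (a + b)) \<simeq>
      Cmp (Cmp (Tns (Idm [Blk a]) (Dn u b)) (Tns (Dn u a) (Idm [Blk b]))) (Tns (Idm [Red u]) (Sp a b))"
    using assms by (intro teq_if_as_eq) auto
  then show ?thesis
    using True assms unfolding traverse_natural_def whisker_def traverse_def by simp
next
  case False
  have "as_eq (Cmp (Tns (Idm [Red u]) (Sp a b)) (Up (a + b) u))
      (Cmp (Cmp (Tns (Up a u) (Idm [Blk b])) (Tns (Idm [Blk a]) (Up b u))) (Tns (Sp a b) (Idm [Red u])))"
    using as_eq.R9a[OF assms, of u] assms by (simp add: mU_def mS_def idb_def)
  then have "Cmp (Tns (Idm [Red u]) (Sp a b)) (Up (a + b) u) \<simeq>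
      Cmp (Cmp (Tns (Up a u) (Idm [Blk b])) (Tns (Idm [Blk a]) (Up b u))) (Tns (Sp a b) (Idm [Red u]))"
    using assms by (intro teq_if_as_eq) auto
  then show ?thesis
    using False assms unfolding traverse_natural_def whisker_def traverse_def by simp
qed

lemma traverse_natural_idb: "traverse_natural down u (idb a) (bk a) (bk a)"
  unfolding idb_def by (intro traverse_natural_Idm) simp

lemma traverse_natural_mM: "traverse_natural down u (mM a b) (bk a @ bk b) (bk (a + b))"
  using traverse_natural_idb[of down u "a + b"] traverse_natural_Mg[of a b down u]
  by (auto simp: mM_def)

lemma traverse_natural_mS: "traverse_natural down u (mS a b) (bk (a + b)) (bk a @ bk b)"
  using traverse_natural_idb[of down u "a + b"] traverse_natural_Sp[of a b down u]
  by (auto simp: mS_def)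

text \<open>The summands of (R2) for S_{b,a} M_{a,b}: there the constraint t - s = d - a forces t = s, and
  the summand for s = 0 is X_{a,b}.\<close>

definition r2_summand :: "nat \<Rightarrow> nat \<Rightarrow> nat \<Rightarrow> 'k mor" where
  "r2_summand a b s = Cmp (Cmp (Tns (mM s (b - s)) (mM (a - s) s)) (Tns (Tns (idb s) (mX (a - s) (b - s))) (idb s)))
                          (Tns (mS s (a - s)) (mS (b - s) s))"

lemma R2rhs_square:
  "R2rhs a b b a = msum [Blk a, Blk b] [Blk b, Blk a] (map (r2_summand a b) [0..<Suc (min a b)])"
proof -
  have diagonal: "concat (map (\<lambda>t. if t = s then [(s, t)] else []) [0..<n]) = [(s, s)]" if "s < n" for s n :: nat
    using that by (induction n) auto
  have "[(s, t). s \<leftarrow> [0..<Suc (min a b)], t \<leftarrow> [0..<Suc (min b a)], int t - int s = int a - int a]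
        = map (\<lambda>s. (s, s)) [0..<Suc (min a b)]"
    by (auto simp: min.commute diagonal intro!: trans[OF arg_cong[where f = concat] concat_map_singleton] map_cong)
  then show ?thesis
    unfolding R2rhs_def r2_summand_def by (simp add: comp_def)
qed

lemma r2_summand_0:
  assumes "a \<ge> 1" "b \<ge> 1"
  shows "r2_summand a b 0 \<simeq> Cr a b"
proof -
  have "r2_summand a b 0 = Cmp (Cmp (Tns (Idm [Blk b]) (Idm [Blk a])) (Tns (Tns (Idm []) (Cr a b)) (Idm [])))
                               (Tns (Idm [Blk a]) (Idm [Blk b]))"
    using assms by (simp add: r2_summand_def mM_def mS_def mX_def idb_def)
  also have "\<dots> \<simeq> Cmp (Cmp (Idm [Blk b, Blk a]) (Cr a b)) (Idm [Blk a, Blk b])"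
    using assms by (intro teq_cmp_cong teq_tns_Idm teq_trans[OF teq_unit_right teq_unit_left]) auto
  also have "\<dots> \<simeq> Cr a b"
    using assms by (intro teq_trans[OF teq_id_right teq_id_left]) auto
  finally show ?thesis .
qed

lemma traverse_natural_r2_summand:
  assumes "traverse_natural down u (mX (a - s) (b - s)) (bk (a - s) @ bk (b - s)) (bk (b - s) @ bk (a - s))"
    and "s \<le> a" "s \<le> b"
  shows "traverse_natural down u (r2_summand a b s) (bk a @ bk b) (bk b @ bk a)"
proof -
  have split: "traverse_natural down u (Tns (mS s (a - s)) (mS (b - s) s))
      (bk (s + (a - s)) @ bk (b - s + s)) (bk s @ bk (a - s) @ bk (b - s) @ bk s)"
    using traverse_natural_tns[OF traverse_natural_mS traverse_natural_mS] by (simp only: append_assoc)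
  have cross: "traverse_natural down u (Tns (Tns (idb s) (mX (a - s) (b - s))) (idb s))
      (bk s @ bk (a - s) @ bk (b - s) @ bk s) (bk s @ bk (b - s) @ bk (a - s) @ bk s)"
    using traverse_natural_tns[OF traverse_natural_tns[OF traverse_natural_idb assms(1)] traverse_natural_idb]
    by (simp only: append_assoc)
  have merge: "traverse_natural down u (Tns (mM s (b - s)) (mM (a - s) s))
      (bk s @ bk (b - s) @ bk (a - s) @ bk s) (bk (s + (b - s)) @ bk (a - s + s))"
    using traverse_natural_tns[OF traverse_natural_mM traverse_natural_mM] by (simp only: append_assoc)
  have "traverse_natural down u (r2_summand a b s)
      (bk (s + (a - s)) @ bk (b - s + s)) (bk (s + (b - s)) @ bk (a - s + s))"
    unfolding r2_summand_def by (rule traverse_natural_cmp[OF traverse_natural_cmp[OF merge cross] split])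
  then show ?thesis
    using assms(2,3) by simp
qed

lemma traverse_natural_Cr_if_summands:
  fixes u :: "'k::comm_ring_1"
  assumes ab: "a \<ge> 1" "b \<ge> 1"
    and summands: "\<And>s. 1 \<le> s \<Longrightarrow> s \<le> min a b \<Longrightarrow>
      traverse_natural down u (r2_summand a b s) [Blk a, Blk b] [Blk b, Blk a]"
  shows "traverse_natural down u (Cr a b) [Blk a, Blk b] [Blk b, Blk a]"
proof -
  let ?G = "msum [Blk a, Blk b] [Blk b, Blk a] (map (r2_summand a b) [1..<Suc (min a b)]) :: 'k mor"
  have nat_G: "traverse_natural down u ?G [Blk a, Blk b] [Blk b, Blk a]"
    using ab summands by (intro traverse_natural_msum) auto
  have "R2rhs a b b a = Ad (r2_summand a b 0) ?G"
    unfolding R2rhs_square by (simp add: upt_conv_Cons[of 0] del: upt_Suc)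
  then have "as_eq (Cmp (mS b a) (mM a b)) (Ad (r2_summand a b 0) ?G)"
    using as_eq.R2[OF ab ab(2,1) add.commute, where 'k = 'k] by (simp only:)
  moreover have "mor_type (r2_summand a b 0 :: 'k mor) = Some ([Blk a, Blk b], [Blk b, Blk a])"
    using teq_mor_type[OF teq_sym[OF r2_summand_0[OF ab]]] ab by simp
  ultimately have "Cmp (mS b a) (mM a b) \<simeq> Ad (r2_summand a b 0) ?G"
    using nat_G ab unfolding traverse_natural_def
    by (intro teq_if_as_eq) (simp_all add: mS_def mM_def del: upt_Suc)
  moreover have "traverse_natural down u (Cmp (mS b a) (mM a b)) [Blk a, Blk b] [Blk b, Blk a]"
    using traverse_natural_cmp[OF traverse_natural_mS[where a = b and b = a, unfolded add.commute[of b a]]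
        traverse_natural_mM] ab
    by simp
  ultimately have "traverse_natural down u (Ad (r2_summand a b 0) ?G) [Blk a, Blk b] [Blk b, Blk a]"
    by (blast intro: traverse_natural_cong)
  then have "traverse_natural down u (r2_summand a b 0) [Blk a, Blk b] [Blk b, Blk a]"
    using nat_G by (rule traverse_natural_cancel)
  then show ?thesis
    by (rule traverse_natural_cong[OF _ r2_summand_0[OF ab]])
qed

lemma traverse_natural_mX:
  fixes u :: "'k::comm_ring_1"
  shows "traverse_natural down u (mX a b) (bk a @ bk b) (bk b @ bk a)"
proof (induction "a + b" arbitrary: a b rule: less_induct)
  case less
  show ?case
  proof (cases "a = 0 \<or> b = 0")
    case True
    then show ?thesis
      using traverse_natural_idb[of down u "a + b"] by (auto simp: mX_def idb_def)
  next
    case False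
    have "traverse_natural down u (r2_summand a b s) [Blk a, Blk b] [Blk b, Blk a]"
      if "1 \<le> s" "s \<le> min a b" for s
    proof -
      have "traverse_natural down u (mX (a - s) (b - s)) (bk (a - s) @ bk (b - s)) (bk (b - s) @ bk (a - s))"
        using that by (intro less) auto
      then have "traverse_natural down u (r2_summand a b s) (bk a @ bk b) (bk b @ bk a)"
        using that by (intro traverse_natural_r2_summand) auto
      then show ?thesis
        using False by simp
    qed
    then have "traverse_natural down u (Cr a b) [Blk a, Blk b] [Blk b, Blk a]"
      using False by (intro traverse_natural_Cr_if_summands) auto
    then show ?thesis
      using False by (simp add: mX_def)
  qed
qed

theorem lemma3p4:
  fixes a b :: nat and u :: "'k::comm_ring_1"
  assumes "a \<ge> 1" and "b \<ge> 1"
  shows "hty (Cmp (Cmp (Tns (Cr a b) (Idm [Red u])) (Tns (Idm [Blk a]) (Dn u b))) (Tns (Dn u a) (Idm [Blk b])))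
             [Red u, Blk a, Blk b] [Blk b, Blk a, Red u]
       \<and> as_eq (Cmp (Cmp (Tns (Cr a b) (Idm [Red u])) (Tns (Idm [Blk a]) (Dn u b))) (Tns (Dn u a) (Idm [Blk b])))
               (Cmp (Cmp (Tns (Idm [Blk b]) (Dn u a)) (Tns (Dn u b) (Idm [Blk a]))) (Tns (Idm [Red u]) (Cr a b)))
       \<and> hty (Cmp (Cmp (Tns (Idm [Red u]) (Cr a b)) (Tns (Up a u) (Idm [Blk b]))) (Tns (Idm [Blk a]) (Up b u)))
             [Blk a, Blk b, Red u] [Red u, Blk b, Blk a]
       \<and> as_eq (Cmp (Cmp (Tns (Idm [Red u]) (Cr a b)) (Tns (Up a u) (Idm [Blk b]))) (Tns (Idm [Blk a]) (Up b u)))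
               (Cmp (Cmp (Tns (Up b u) (Idm [Blk a])) (Tns (Idm [Blk b]) (Up a u))) (Tns (Cr a b) (Idm [Red u])))"
proof -
  have down: "Cmp (Tns (Cr a b) (Idm [Red u])) (Cmp (Tns (Idm [Blk a]) (Dn u b)) (Tns (Dn u a) (Idm [Blk b]))) \<simeq>
              Cmp (Cmp (Tns (Idm [Blk b]) (Dn u a)) (Tns (Dn u b) (Idm [Blk a]))) (Tns (Idm [Red u]) (Cr a b))"
    using traverse_natural_mX[of True u a b] assms
    unfolding mX_def traverse_natural_def whisker_def traverse_def by simp
  have up: "Cmp (Tns (Idm [Red u]) (Cr a b)) (Cmp (Tns (Up a u) (Idm [Blk b])) (Tns (Idm [Blk a]) (Up b u))) \<simeq>
            Cmp (Cmp (Tns (Up b u) (Idm [Blk a])) (Tns (Idm [Blk b]) (Up a u))) (Tns (Cr a b) (Idm [Red u]))"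
    using traverse_natural_mX[of False u a b] assms
    unfolding mX_def traverse_natural_def whisker_def traverse_def by simp
  have "Cmp (Cmp (Tns (Cr a b) (Idm [Red u])) (Tns (Idm [Blk a]) (Dn u b))) (Tns (Dn u a) (Idm [Blk b])) \<simeq>
        Cmp (Cmp (Tns (Idm [Blk b]) (Dn u a)) (Tns (Dn u b) (Idm [Blk a]))) (Tns (Idm [Red u]) (Cr a b))"
    using teq_trans[OF teq_cmp_assoc down] assms by simp
  moreover have "Cmp (Cmp (Tns (Idm [Red u]) (Cr a b)) (Tns (Up a u) (Idm [Blk b]))) (Tns (Idm [Blk a]) (Up b u)) \<simeq>
        Cmp (Cmp (Tns (Up b u) (Idm [Blk a])) (Tns (Idm [Blk b]) (Up a u))) (Tns (Cr a b) (Idm [Red u]))"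
    using teq_trans[OF teq_cmp_assoc up] assms by simp
  ultimately show ?thesis
    using assms by (simp add: hty_iff_mor_type teq_as_eq)
qed

end
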